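(* Let $\mathcal{H}$ be an infinite dimensional complex Hilbert space and let $\phi:\mathcal{B}(\mathcal{H})\to\mathcal{B}(\mathcal{H})$ be a bijective map preserving the Douglas solution in both directions. If $P\in\mathcal{B}(\mathcal{H})$ is an orthogonal projection ($P=P^2=P^*$), then $\phi(P)$ is an orthogonal projection.
   Context: $\mathcal{B}(\mathcal{H})$ denotes the algebra of all bounded linear operators on $\mathcal{H}$. For $A,B\in\mathcal{B}(\mathcal{H})$ with $\operatorname{ran}A\subseteq\operatorname{ran}B$, the Douglas solution of $A=BX$ is the unique $D\in\mathcal{B}(\mathcal{H})$ with $BD=A$ and $\operatorname{ran}D\subseteq(\ker B)^\perp$. A map $\phi:\mathcal{B}(\mathcal{H})\to\mathcal{B}(\mathcal{H})$ preserves the Douglas solution in both directions if for all $A,B,X\in\mathcal{B}(\mathcal{H})$: $X$ is the Douglas solution of $A=BX$ if and only if $\phi(X)$ is the Douglas solution of $\phi(A)=\phi(B)Y$. *)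

theory Defs
  imports "HOL-Analysis.Analysis"
begin

class complex_hilbert = banach +
  fixes scaleC :: "complex \<Rightarrow> 'a \<Rightarrow> 'a"
    and cinner :: "'a \<Rightarrow> 'a \<Rightarrow> complex"
  assumes scaleC_add_right: "scaleC a (x + y) = scaleC a x + scaleC a y"
    and scaleC_add_left: "scaleC (a + b) x = scaleC a x + scaleC b x"
    and scaleC_scaleC: "scaleC a (scaleC b x) = scaleC (a * b) x"
    and scaleC_one: "scaleC 1 x = x"
    and scaleR_scaleC: "scaleR r x = scaleC (complex_of_real r) x"
    and cinner_add_left: "cinner (x + y) z = cinner x z + cinner y z"
    and cinner_scaleC_left: "cinner (scaleC a x) y = a * cinner x y"
    and cinner_commute: "cinner x y = cnj (cinner y x)"
    and norm_eq_sqrt_cinner: "norm x = sqrt (Re (cinner x x))"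

definition cspan :: "'a::complex_hilbert set \<Rightarrow> 'a set" where
  "cspan S = {x. \<exists>T c. finite T \<and> T \<subseteq> S \<and> x = (\<Sum>v\<in>T. scaleC (c v) v)}"

definition infinite_dim :: "'a::complex_hilbert itself \<Rightarrow> bool" where
  "infinite_dim _ \<longleftrightarrow> (\<forall>S::'a set. finite S \<longrightarrow> cspan S \<noteq> UNIV)"

definition bop :: "('a::complex_hilbert \<Rightarrow> 'a) \<Rightarrow> bool" where
  "bop T \<longleftrightarrow> bounded_linear T \<and> (\<forall>c x. T (scaleC c x) = scaleC c (T x))"

definition BH :: "('a::complex_hilbert \<Rightarrow> 'a) set" where
  "BH = {T. bop T}"

text \<open>X is the Douglas solution of A = B X: B X = A and ran X \<subseteq> (ker B)^\<bottom>.\<close>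
definition douglas_sol :: "('a::complex_hilbert \<Rightarrow> 'a) \<Rightarrow> ('a \<Rightarrow> 'a) \<Rightarrow> ('a \<Rightarrow> 'a) \<Rightarrow> bool" where
  "douglas_sol A B X \<longleftrightarrow> bop X \<and> B \<circ> X = A \<and> (\<forall>x y. B y = 0 \<longrightarrow> cinner (X x) y = 0)"

definition orth_proj :: "('a::complex_hilbert \<Rightarrow> 'a) \<Rightarrow> bool" where
  "orth_proj P \<longleftrightarrow> bop P \<and> P \<circ> P = P \<and> (\<forall>x y. cinner (P x) y = cinner x (P y))"

end

theory Submission
  imports Defs
begin

text \<open>An operator P is an orthogonal projection exactly when P is the Douglas solution of
  P = P X: idempotence is P P = P, and self-adjointness follows from ran P being orthogonal
  to ker P, by splitting every vector as P x + (x - P x). So a map preserving Douglas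
  solutions in both directions maps orthogonal projections to orthogonal projections.\<close>

lemma cinner_zero_left [simp]: "cinner 0 (z::'a::complex_hilbert) = 0"
  using cinner_add_left[of "0::'a" 0 z] by simp

lemma cinner_zero_right [simp]: "cinner (z::'a::complex_hilbert) 0 = 0"
  using cinner_commute[of z 0] by simp

lemma cinner_add_right: "cinner (z::'a::complex_hilbert) (x + y) = cinner z x + cinner z y"
  by (metis cinner_add_left cinner_commute complex_cnj_add)

lemma cinner_eq_cinner_proj_left:
  fixes Q :: "'a::complex_hilbert \<Rightarrow> 'a"
  assumes "cinner (Q x) (y - Q y) = 0"
  shows "cinner (Q x) y = cinner (Q x) (Q y)"
  using cinner_add_right[of "Q x" "Q y" "y - Q y"] assms by simp

lemma orth_proj_iff_douglas_sol_self:
  fixes P :: "'a::complex_hilbert \<Rightarrow> 'a"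
  shows "orth_proj P \<longleftrightarrow> douglas_sol P P P"
proof
  assume "orth_proj P"
  then show "douglas_sol P P P"
    unfolding orth_proj_def douglas_sol_def by auto
next
  assume sol: "douglas_sol P P P"
  then have bop: "bop P" and idem: "P \<circ> P = P"
    and ran_perp_ker: "\<And>x y. P y = 0 \<Longrightarrow> cinner (P x) y = 0"
    unfolding douglas_sol_def by auto
  have "linear P"
    using bop unfolding bop_def by (simp add: bounded_linear.linear)
  moreover have "P (P x) = P x" for x
    using idem by (metis comp_apply)
  ultimately have ker: "P (x - P x) = 0" for x
    by (simp add: linear_diff)
  have "cinner (P x) y = cinner x (P y)" for x y
  proof -
    have "cinner (P x) y = cinner (P x) (P y)"
      by (rule cinner_eq_cinner_proj_left) (rule ran_perp_ker[OF ker])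
    also have "\<dots> = cnj (cinner (P y) (P x))"
      by (rule cinner_commute)
    also have "cinner (P y) (P x) = cinner (P y) x"
      by (rule cinner_eq_cinner_proj_left[symmetric]) (rule ran_perp_ker[OF ker])
    finally show ?thesis
      by (metis cinner_commute)
  qed
  with bop idem show "orth_proj P"
    unfolding orth_proj_def by auto
qed

theorem claim3:
  fixes \<phi> :: "('a::complex_hilbert \<Rightarrow> 'a) \<Rightarrow> ('a \<Rightarrow> 'a)"
  assumes "infinite_dim TYPE('a)"
    and "bij_betw \<phi> BH BH"
    and "\<forall>A\<in>BH. \<forall>B\<in>BH. \<forall>X\<in>BH.
           douglas_sol A B X \<longleftrightarrow> douglas_sol (\<phi> A) (\<phi> B) (\<phi> X)"
    and "P \<in> BH" and "orth_proj P"
  shows "orth_proj (\<phi> P)"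
proof -
  have "douglas_sol P P P"
    using \<open>orth_proj P\<close> by (simp add: orth_proj_iff_douglas_sol_self)
  then have "douglas_sol (\<phi> P) (\<phi> P) (\<phi> P)"
    using assms(3) \<open>P \<in> BH\<close> by blast
  then show ?thesis
    by (simp add: orth_proj_iff_douglas_sol_self)
qed

end
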